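(* Let $\mathcal{U},\mathcal{Y}$ be Hilbert spaces, $\mathcal{F}$ a closed subspace of $\mathcal{U}$, and $\omega=\begin{pmatrix}\omega_1\\ \omega_2\end{pmatrix}:\mathcal{F}\to\mathcal{Y}\oplus\mathcal{U}$ a contraction. If either $\omega_1$ is a strict contraction (i.e. $\|\omega_1\|<1$) or $\dim(\mathcal{U})<\infty$, then the condition "$\omega_1(\Pi_{\mathcal{F}}\omega_2)^n:\mathcal{F}\to\mathcal{Y}$ is a co-isometry for every $n=0,1,2,\ldots$" is equivalent to $\mathcal{Y}=\{0\}$.
   Context: $\Pi_{\mathcal{F}}:\mathcal{U}\to\mathcal{F}$ is the orthogonal projection. *)

theory Defs
  imports "HOL-Analysis.Analysis"
begin

text \<open>Operators with domain F are total functions whose values off F are irrelevant.\<close>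

definition linear_on_set :: "'a::real_vector set \<Rightarrow> ('a \<Rightarrow> 'b::real_vector) \<Rightarrow> bool" where
  "linear_on_set F T \<longleftrightarrow>
     (\<forall>x\<in>F. \<forall>y\<in>F. T (x + y) = T x + T y) \<and> (\<forall>c. \<forall>x\<in>F. T (c *\<^sub>R x) = c *\<^sub>R T x)"

definition orth_proj :: "'a::real_inner set \<Rightarrow> 'a \<Rightarrow> 'a" where
  "orth_proj F x = (THE p. p \<in> F \<and> (\<forall>y\<in>F. inner (x - p) y = 0))"

text \<open>T : F \<rightarrow> Y is a co-isometry: its Hilbert adjoint T* : Y \<rightarrow> F satisfies T T* = I.\<close>
definition coisometry_on :: "'a::real_inner set \<Rightarrow> ('a \<Rightarrow> 'b::real_inner) \<Rightarrow> bool" where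
  "coisometry_on F T \<longleftrightarrow>
     (\<exists>S. (\<forall>y. S y \<in> F) \<and> (\<forall>x\<in>F. \<forall>y. inner (T x) y = inner x (S y)) \<and> (\<forall>y. T (S y) = y))"

end

theory Submission
  imports Defs
begin

text \<open>Write \<open>A = \<Pi>\<^sub>F \<omega>\<^sub>2\<close>. If every \<open>\<omega>\<^sub>1 A\<^sup>n\<close> is a co-isometry and \<open>y \<noteq> 0\<close>, then
  \<open>x\<^sub>n = (\<omega>\<^sub>1 A\<^sup>n)\<^sup>* y\<close> has norm \<open>\<parallel>y\<parallel>\<close> and is mapped onto \<open>y\<close>. A strict contraction
  \<open>\<omega>\<^sub>1\<close> cannot map \<open>x\<^sub>0\<close> onto \<open>y\<close>. Otherwise, since \<open>\<parallel>\<omega>\<^sub>1 z\<parallel>\<^sup>2 + \<parallel>A z\<parallel>\<^sup>2 \<le> \<parallel>z\<parallel>\<^sup>2\<close>, the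
  orbit of \<open>x\<^sub>n\<close> under \<open>A\<close> can only reach the full output norm \<open>\<parallel>y\<parallel>\<close> at step \<open>n\<close> if
  \<open>\<omega>\<^sub>1 A\<^sup>m x\<^sub>n = 0\<close> for all \<open>m < n\<close>; hence \<open>\<langle>x\<^sub>n, x\<^sub>m\<rangle> = \<langle>\<omega>\<^sub>1 A\<^sup>m x\<^sub>n, y\<rangle> = 0\<close>, and the
  \<open>x\<^sub>n\<close> form an infinite orthogonal family, impossible in finite dimension.\<close>

lemma coisometry_onE:
  fixes T :: "'a::real_inner \<Rightarrow> 'b::real_inner"
  assumes "coisometry_on F T"
  obtains x where "x \<in> F" "T x = y" "norm x = norm y" "\<forall>z\<in>F. inner (T z) y = inner z x"
proof -
  obtain S where S: "\<forall>y. S y \<in> F" "\<forall>x\<in>F. \<forall>y. inner (T x) y = inner x (S y)" "\<forall>y. T (S y) = y"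
    using assms unfolding coisometry_on_def by blast
  have "inner y y = inner (S y) (S y)"
    using S by metis
  then have "norm (S y) = norm y"
    by (simp add: norm_eq_sqrt_inner)
  with S show thesis
    using that by blast
qed

lemma coisometry_on_trivial_codomain:
  assumes "subspace F" and "(UNIV :: 'b::real_inner set) = {0}"
  shows "coisometry_on F (T :: 'a::real_inner \<Rightarrow> 'b)"
proof -
  have "\<And>y::'b. y = 0"
    using assms(2) by auto
  then show ?thesis
    unfolding coisometry_on_def using subspace_0[OF assms(1)]
    by (intro exI[of _ "\<lambda>_. 0"]) (metis inner_zero_left inner_zero_right)
qed

lemma coisometry_on_strict_contraction_trivial:
  fixes T :: "'a::real_inner \<Rightarrow> 'b::real_inner"
  assumes "coisometry_on F T" and "k < 1" and "\<forall>x\<in>F. norm (T x) \<le> k * norm x"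
  shows "(UNIV :: 'b set) = {0}"
proof (rule ccontr)
  assume "(UNIV :: 'b set) \<noteq> {0}"
  then obtain y :: 'b where "y \<noteq> 0"
    by auto
  obtain x where "x \<in> F" "T x = y" "norm x = norm y"
    using coisometry_onE[OF assms(1)] by metis
  with assms(3) have "norm y \<le> k * norm y"
    by metis
  with \<open>k < 1\<close> \<open>y \<noteq> 0\<close> show False
    by (smt (verit) mult_less_cancel_right2 zero_less_norm_iff)
qed

lemma orth_proj_exists_finite_dim:
  fixes F B :: "'a::real_inner set"
  assumes "subspace F" and "finite B" and "span B = UNIV"
  shows "\<exists>p\<in>F. \<forall>v\<in>F. inner (u - p) v = 0"
proof -
  obtain BF where BF: "BF \<subseteq> F" "independent BF" "F \<subseteq> span BF"
    using basis_exists[of F] by metis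
  have "finite BF"
    using independent_span_bound[OF assms(2) BF(2)] assms(3) by auto
  then obtain C where C: "finite C" "span C = span BF" "pairwise orthogonal C"
    using basis_orthogonal by blast
  have span_C: "span C = F"
    using C(2) BF assms(1) by (metis span_minimal subset_antisym)
  define p where "p = (\<Sum>c\<in>C. (inner u c / inner c c) *\<^sub>R c)"
  have "p \<in> F"
    unfolding p_def span_C[symmetric] by (intro span_sum span_scale span_base)
  have orth_C: "inner (u - p) c = 0" if "c \<in> C" for c
  proof -
    have "inner p c = (\<Sum>d\<in>C. (inner u d / inner d d) * inner d c)"
      unfolding p_def by (simp add: inner_sum_left)
    also have "\<dots> = (inner u c / inner c c) * inner c c
        + (\<Sum>d\<in>C-{c}. (inner u d / inner d d) * inner d c)"
      using C(1) that by (simp add: sum.remove)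
    also have "(\<Sum>d\<in>C-{c}. (inner u d / inner d d) * inner d c) = 0"
      using C(3) that by (intro sum.neutral) (auto simp: pairwise_def orthogonal_def)
    also have "(inner u c / inner c c) * inner c c = inner u c"
      by (cases "c = 0") auto
    finally show ?thesis
      by (simp add: inner_diff_left)
  qed
  have "\<forall>v\<in>F. inner (u - p) v = 0"
    using orthogonal_to_span[of _ C "u - p"] orth_C span_C by (auto simp: orthogonal_def)
  with \<open>p \<in> F\<close> show ?thesis
    by blast
qed

lemma orth_proj_characterization:
  assumes "subspace F" and "\<exists>p\<in>F. \<forall>v\<in>F. inner (u - p) v = 0"
  shows "orth_proj F u \<in> F \<and> (\<forall>v\<in>F. inner (u - orth_proj F u) v = 0)"
  unfolding orth_proj_def
proof (rule theI')
  show "\<exists>!p. p \<in> F \<and> (\<forall>v\<in>F. inner (u - p) v = 0)"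
  proof (rule ex_ex1I)
    fix p q
    assume p: "p \<in> F \<and> (\<forall>v\<in>F. inner (u - p) v = 0)"
      and q: "q \<in> F \<and> (\<forall>v\<in>F. inner (u - q) v = 0)"
    then have "p - q \<in> F"
      using assms(1) by (simp add: subspace_diff)
    then have "inner (u - q) (p - q) - inner (u - p) (p - q) = 0"
      using p q by simp
    then have "inner (p - q) (p - q) = 0"
      by (simp add: inner_diff_left)
    then show "p = q"
      by simp
  qed (use assms(2) in blast)
qed

lemma norm_orth_proj_le:
  assumes "subspace F" and "\<exists>p\<in>F. \<forall>v\<in>F. inner (u - p) v = 0"
  shows "norm (orth_proj F u) \<le> norm u"
proof -
  define p where "p = orth_proj F u"
  have "inner (u - p) p = 0"
    using orth_proj_characterization[OF assms] unfolding p_def by blast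
  then have "norm p * norm p = inner u p"
    by (simp add: inner_diff_left norm_eq_sqrt_inner)
  also have "\<dots> \<le> norm u * norm p"
    by (rule norm_cauchy_schwarz)
  finally show ?thesis
    unfolding p_def[symmetric] by (cases "p = 0") auto
qed

lemma iterate_output_vanishes_before_full_output:
  fixes W :: "'a::real_normed_vector \<Rightarrow> 'b::real_normed_vector"
  assumes A_into: "\<forall>z\<in>F. A z \<in> F"
    and energy: "\<forall>z\<in>F. norm (W z)^2 + norm (A z)^2 \<le> norm z^2"
    and "x \<in> F" and full: "norm x \<le> norm (W ((A ^^ n) x))" and "m < n"
  shows "W ((A ^^ m) x) = 0"
proof -
  have orbit_in: "(A ^^ k) x \<in> F" for k
    using \<open>x \<in> F\<close> A_into by (induction k) auto
  have W_le: "norm (W z) \<le> norm z" and A_le: "norm (A z) \<le> norm z" if "z \<in> F" for z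
    using energy that by (smt (verit) norm_ge_zero power2_le_imp_le zero_le_power2)+
  have dec: "decseq (\<lambda>k. norm ((A ^^ k) x))"
    using A_le orbit_in by (intro decseq_SucI) simp
  have "norm x \<le> norm ((A ^^ Suc m) x)"
    using full W_le[OF orbit_in[of n]] decseqD[OF dec, of "Suc m" n] \<open>m < n\<close> by simp
  moreover have "norm ((A ^^ m) x) \<le> norm x"
    using decseqD[OF dec, of 0 m] by simp
  moreover have "norm (W ((A ^^ m) x))^2 + norm ((A ^^ Suc m) x)^2 \<le> norm ((A ^^ m) x)^2"
    using energy orbit_in by simp
  ultimately have "norm (W ((A ^^ m) x))^2 \<le> 0"
    by (smt (verit) norm_ge_zero power_mono)
  then show ?thesis
    by simp
qed

lemma no_orthogonal_sequence_finite_dim: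
  fixes x :: "nat \<Rightarrow> 'a::real_inner" and B :: "'a set"
  assumes "finite B" and "span B = UNIV"
    and "\<And>n. x n \<noteq> 0" and "\<And>m n. m \<noteq> n \<Longrightarrow> inner (x m) (x n) = 0"
  shows False
proof -
  have "inj x"
    using assms(3,4) by (metis injI inner_eq_zero_iff)
  have "pairwise orthogonal (range x)"
    using assms(4) unfolding pairwise_def orthogonal_def by (metis imageE)
  then have "independent (range x)"
    using assms(3) by (metis pairwise_orthogonal_independent rangeE)
  then have "finite (range x)"
    using independent_span_bound[OF assms(1)] assms(2) by blast
  with range_inj_infinite[OF \<open>inj x\<close>] show False
    by contradiction
qed

lemma coisometric_iterates_finite_dim_trivial:
  fixes W :: "'a::real_inner \<Rightarrow> 'b::real_inner" and B :: "'a set"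
  assumes "finite B" and "span B = UNIV"
    and A_into: "\<forall>z\<in>F. A z \<in> F"
    and energy: "\<forall>z\<in>F. norm (W z)^2 + norm (A z)^2 \<le> norm z^2"
    and coiso: "\<forall>n. coisometry_on F (\<lambda>z. W ((A ^^ n) z))"
  shows "(UNIV :: 'b set) = {0}"
proof (rule ccontr)
  assume "(UNIV :: 'b set) \<noteq> {0}"
  then obtain y :: 'b where "y \<noteq> 0"
    by auto
  have "\<forall>n. \<exists>x. x \<in> F \<and> W ((A ^^ n) x) = y \<and> norm x = norm y
      \<and> (\<forall>z\<in>F. inner (W ((A ^^ n) z)) y = inner z x)"
    using coisometry_onE[OF coiso[rule_format]] by metis
  then obtain x where x: "\<And>n. x n \<in> F" "\<And>n. W ((A ^^ n) (x n)) = y" "\<And>n. norm (x n) = norm y"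
      "\<And>n z. z \<in> F \<Longrightarrow> inner (W ((A ^^ n) z)) y = inner z (x n)"
    by metis
  have early: "W ((A ^^ m) (x n)) = 0" if "m < n" for m n
    using iterate_output_vanishes_before_full_output[OF A_into energy x(1)] x(2,3) that
    by (metis order.refl)
  have "inner (x n) (x m) = 0" if "m < n" for m n
    using x(4)[OF x(1), of m n] early[OF that] by simp
  then have "inner (x m) (x n) = 0" if "m \<noteq> n" for m n
    using that by (metis inner_commute linorder_neq_iff)
  moreover have "x n \<noteq> 0" for n
    using x(3) \<open>y \<noteq> 0\<close> by (metis norm_eq_zero)
  ultimately show False
    using no_orthogonal_sequence_finite_dim[OF assms(1,2)] by blast
qed

theorem proposition2p2:
  fixes F :: "'u::{real_inner, complete_space} set"
    and \<omega> :: "'u \<Rightarrow> 'y::{real_inner, complete_space} \<times> 'u"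
  assumes "subspace F" and "closed F"
    and "linear_on_set F \<omega>"
    and "\<forall>x\<in>F. norm (\<omega> x) \<le> norm x"
    and "(\<exists>k<1. \<forall>x\<in>F. norm (fst (\<omega> x)) \<le> k * norm x)
         \<or> (\<exists>B::'u set. finite B \<and> span B = UNIV)"
  shows "(\<forall>n::nat. coisometry_on F
            (\<lambda>x. fst (\<omega> (((\<lambda>z. orth_proj F (snd (\<omega> z))) ^^ n) x))))
         \<longleftrightarrow> (UNIV :: 'y set) = {0}"
    (is "(\<forall>n. coisometry_on F (\<lambda>x. fst (\<omega> ((?A ^^ n) x)))) \<longleftrightarrow> _")
proof
  assume coiso: "\<forall>n. coisometry_on F (\<lambda>x. fst (\<omega> ((?A ^^ n) x)))"
  from assms(5) show "(UNIV :: 'y set) = {0}"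
  proof
    assume "\<exists>k<1. \<forall>x\<in>F. norm (fst (\<omega> x)) \<le> k * norm x"
    then show ?thesis
      using coisometry_on_strict_contraction_trivial coiso[rule_format, of 0] by auto
  next
    assume "\<exists>B::'u set. finite B \<and> span B = UNIV"
    then obtain B :: "'u set" where B: "finite B" "span B = UNIV"
      by blast
    note proj_exists = orth_proj_exists_finite_dim[OF assms(1) B]
    have "norm (fst (\<omega> z))^2 + norm (?A z)^2 \<le> norm z^2" if "z \<in> F" for z
    proof -
      have "norm (?A z)^2 \<le> norm (snd (\<omega> z))^2"
        using norm_orth_proj_le[OF assms(1) proj_exists] by (simp add: power_mono)
      moreover have "norm (\<omega> z)^2 \<le> norm z^2"
        using assms(4) that by (simp add: power_mono)
      moreover have "norm (\<omega> z)^2 = norm (fst (\<omega> z))^2 + norm (snd (\<omega> z))^2"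
        by (metis norm_Pair prod.collapse real_sqrt_pow2 add_nonneg_nonneg zero_le_power2)
      ultimately show ?thesis
        by linarith
    qed
    moreover have "\<forall>z\<in>F. ?A z \<in> F"
      using orth_proj_characterization[OF assms(1) proj_exists] by blast
    ultimately show ?thesis
      using coisometric_iterates_finite_dim_trivial[OF B _ _ coiso] by blast
  qed
qed (use coisometry_on_trivial_codomain assms(1) in blast)

end
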